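(* For every MTL sentence $\phi$ (whose atomic propositions are taken to be nullary fluent predicates): $\models_{\mathrm{MTL}}\phi$ iff $\models_{\text{t-ESG}}\phi$.
   Context: The logic t-ESG (relevant fragment). Action standard names $\mathcal N_A$ (countably infinite); fluent predicate symbols including nullary ones. Timed traces are finite or infinite sequences $t_1p_1t_2p_2\cdots$ with non-decreasing $t_i\in\mathbb R_{\ge0}$ and $p_i\in\mathcal N_A$; $\mathcal T$ denotes the set of all timed traces; $(p_1,t_1)\cdots(p_k,t_k)$ denotes $t_1p_1\cdots t_kp_k$; $\mathrm{time}(z)=t_k$ for such $z$, $\mathrm{time}(\langle\rangle)=0$. A t-ESG world $w$ assigns in particular to each primitive formula $F(\vec n)$ and each finite trace $z$ a truth value $w[F(\vec n),z]\in\{0,1\}$ (it also assigns values to terms and clocks subject to rigidity, unique-names and clock-progression constraints that impose no restriction on the truth values of fluent predicates). Trace formulas: atoms $F$ (nullary fluents), $\neg$, $\wedge$, and $\phi\,\mathcal U_I\,\psi$ with $I$ an open/closed/half-closed interval with natural-number (or $\infty$) endpoints. Truth: $w,z,\tau\models F$ iff $w[F,z]=1$; Boolean connectives usual; $w,z,\tau\models\phi\,\mathcal U_I\,\psi$ iff there are $\tau'\in\mathcal T$ and nonempty finite $z_1=(p_1,t_1)\cdots(p_k,t_k)$ with $\tau=z_1\tau'$, $w,zz_1,\tau'\models\psi$, $\mathrm{time}(z_1)\in\mathrm{time}(z)+I$, and $w,zz_2,z_3\tau'\models\phi$ for all splits $z_1=z_2z_3$ into nonempty time–action sequences. $\models_{\text{t-ESG}}\phi$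 means $w,\langle\rangle,\tau\models\phi$ for every world $w$ and every $\tau\in\mathcal T$. MTL (pointwise semantics): formulas over propositions $P$: $p$, $\neg\phi$, $\phi\wedge\psi$, $\phi\,\mathcal U_I\,\psi$. A timed word is a finite or infinite sequence $\rho=(\rho_0,t_0)(\rho_1,t_1)\cdots$, $\rho_i\subseteq P$, $t_0=0$, non-decreasing $t_i\in\mathbb R_{\ge0}$. $\rho,i\models p$ iff $p\in\rho_i$; Boolean connectives usual; $\rho,i\models\phi\,\mathcal U_I\,\psi$ iff there is $j$ with $i<j<|\rho|$, $\rho,j\models\psi$, $t_j-t_i\in I$, and $\rho,m\models\phi$ for all $i<m<j$. $\models_{\mathrm{MTL}}\phi$ means $\rho,0\models\phi$ for every timed word $\rho$. *)

theory Defs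
  imports Complex_Main "HOL-Library.Extended_Nat"
begin

text \<open>Intv l lc u uc: lower endpoint l (closed iff lc), upper endpoint u
  (None = infinity; closed iff uc, the flag being ignored for infinity).\<close>
datatype interval = Intv nat bool "nat option" bool

fun in_interval :: "real \<Rightarrow> interval \<Rightarrow> bool" where
  "in_interval x (Intv l lc u uc) =
     ((if lc then real l \<le> x else real l < x) \<and>
      (case u of None \<Rightarrow> True | Some b \<Rightarrow> (if uc then x \<le> real b else x < real b)))"

datatype 'p form =
    Atom 'p
  | Neg "'p form"
  | Conj "'p form" "'p form"
  | Until interval "'p form" "'p form"

datatype 'a tseq = Fin "'a list" | Inf "nat \<Rightarrow> 'a"

fun slen :: "'a tseq \<Rightarrow> enat" where
  "slen (Fin xs) = enat (length xs)"
| "slen (Inf f) = \<infinity>"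

fun snth :: "'a tseq \<Rightarrow> nat \<Rightarrow> 'a" where
  "snth (Fin xs) i = xs ! i"
| "snth (Inf f) i = f i"

fun sconc :: "'a list \<Rightarrow> 'a tseq \<Rightarrow> 'a tseq" where
  "sconc zs (Fin xs) = Fin (zs @ xs)"
| "sconc zs (Inf f) = Inf (\<lambda>i. if i < length zs then zs ! i else f (i - length zs))"

type_synonym 'p timed_word = "('p set \<times> real) tseq"

definition timed_word :: "'p timed_word \<Rightarrow> bool" where
  "timed_word \<rho> \<longleftrightarrow> 0 < slen \<rho> \<and> snd (snth \<rho> 0) = 0 \<and>
     (\<forall>i j. i \<le> j \<and> enat j < slen \<rho> \<longrightarrow> snd (snth \<rho> i) \<le> snd (snth \<rho> j))"

fun mtl_sat :: "'p timed_word \<Rightarrow> nat \<Rightarrow> 'p form \<Rightarrow> bool" where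
  "mtl_sat \<rho> i (Atom p) = (p \<in> fst (snth \<rho> i))"
| "mtl_sat \<rho> i (Neg \<phi>) = (\<not> mtl_sat \<rho> i \<phi>)"
| "mtl_sat \<rho> i (Conj \<phi> \<psi>) = (mtl_sat \<rho> i \<phi> \<and> mtl_sat \<rho> i \<psi>)"
| "mtl_sat \<rho> i (Until I \<phi> \<psi>) =
     (\<exists>j. i < j \<and> enat j < slen \<rho> \<and> mtl_sat \<rho> j \<psi> \<and>
          in_interval (snd (snth \<rho> j) - snd (snth \<rho> i)) I \<and>
          (\<forall>m. i < m \<and> m < j \<longrightarrow> mtl_sat \<rho> m \<phi>))"

definition mtl_valid :: "'p form \<Rightarrow> bool" where
  "mtl_valid \<phi> \<longleftrightarrow> (\<forall>\<rho>. timed_word \<rho> \<longrightarrow> mtl_sat \<rho> 0 \<phi>)"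

text \<open>Action standard names are modelled by nat (countably infinite).
  A timed trace is a finite or infinite sequence of pairs (p_i, t_i).\<close>
type_synonym ftrace = "(nat \<times> real) list"
type_synonym ttrace = "(nat \<times> real) tseq"

definition is_ttrace :: "ttrace \<Rightarrow> bool" where
  "is_ttrace \<tau> \<longleftrightarrow> (\<forall>i j. i \<le> j \<and> enat j < slen \<tau> \<longrightarrow>
      0 \<le> snd (snth \<tau> i) \<and> snd (snth \<tau> i) \<le> snd (snth \<tau> j))"

definition traces :: "ttrace set" where
  "traces = {\<tau>. is_ttrace \<tau>}"

definition time :: "ftrace \<Rightarrow> real" where
  "time z = (if z = [] then 0 else snd (last z))"

text \<open>The relevant part of a world: truth values of nullary fluents after finite traces.\<close>
type_synonym 'p world = "'p \<Rightarrow> ftrace \<Rightarrow> bool"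

fun esg_sat :: "'p world \<Rightarrow> ftrace \<Rightarrow> ttrace \<Rightarrow> 'p form \<Rightarrow> bool" where
  "esg_sat w z \<tau> (Atom F) = w F z"
| "esg_sat w z \<tau> (Neg \<phi>) = (\<not> esg_sat w z \<tau> \<phi>)"
| "esg_sat w z \<tau> (Conj \<phi> \<psi>) = (esg_sat w z \<tau> \<phi> \<and> esg_sat w z \<tau> \<psi>)"
| "esg_sat w z \<tau> (Until I \<phi> \<psi>) =
     (\<exists>\<tau>' z1. \<tau>' \<in> traces \<and> z1 \<noteq> [] \<and> \<tau> = sconc z1 \<tau>' \<and>
        esg_sat w (z @ z1) \<tau>' \<psi> \<and> in_interval (time z1 - time z) I \<and>
        (\<forall>z2 z3. z1 = z2 @ z3 \<and> z2 \<noteq> [] \<and> z3 \<noteq> [] \<longrightarrow>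
           esg_sat w (z @ z2) (sconc z3 \<tau>') \<phi>))"

definition esg_valid :: "'p form \<Rightarrow> bool" where
  "esg_valid \<phi> \<longleftrightarrow> (\<forall>(w :: 'p world) \<tau>. \<tau> \<in> traces \<longrightarrow> esg_sat w [] \<tau> \<phi>)"

end

theory Submission
  imports Defs
begin

(* A world w and a timed trace T determine a timed word whose n-th letter holds the fluents
   true after the first n actions of T, stamped with the time of the last of them (0 for the
   empty history). Conversely, a timed word determines a trace whose i-th action happens at
   the word's (i+1)-st time stamp, together with a world that reads the letter indexed by the
   length of the history. In both directions position n of the word agrees with the t-ESG
   configuration (first n actions, remaining trace), and by structural induction the two
   semantics agree there: a t-ESG until splits the remaining trace into a nonempty finite
   part z1 and a rest, which is the same as choosing the later position n + |z1|, and the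
   splits of z1 are exactly the positions strictly in between. *)

lemma enat_le_trans: "m \<le> n \<Longrightarrow> enat n \<le> x \<Longrightarrow> enat m \<le> x"
  by (erule order_trans[rotated]) simp

fun tstake :: "nat \<Rightarrow> 'a tseq \<Rightarrow> 'a list" where
  "tstake n (Fin xs) = take n xs"
| "tstake n (Inf f) = map f [0..<n]"

fun tsdrop :: "nat \<Rightarrow> 'a tseq \<Rightarrow> 'a tseq" where
  "tsdrop n (Fin xs) = Fin (drop n xs)"
| "tsdrop n (Inf f) = Inf (\<lambda>i. f (i + n))"

lemma tstake_0 [simp]: "tstake 0 X = []"
  by (cases X) auto

lemma tsdrop_0 [simp]: "tsdrop 0 X = X"
  by (cases X) auto

lemma length_tstake: "enat n \<le> slen X \<Longrightarrow> length (tstake n X) = n"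
  by (cases X) auto

lemma snth_tsdrop: "enat (i + n) < slen X \<Longrightarrow> snth (tsdrop n X) i = snth X (i + n)"
  by (cases X) (auto simp: add.commute)

lemma last_tstake: "enat (Suc n) \<le> slen X \<Longrightarrow> last (tstake (Suc n) X) = snth X n"
  by (cases X) (auto simp: take_Suc_conv_app_nth)

lemma take_tstake: "m \<le> n \<Longrightarrow> take m (tstake n X) = tstake m X"
  by (cases X) (auto simp: min_absorb1 take_map)

lemma tstake_add: "tstake (n + k) X = tstake n X @ tstake k (tsdrop n X)"
  by (cases X) (auto simp: take_add nth_append intro!: nth_equalityI)

lemma tsdrop_add: "tsdrop k (tsdrop n X) = tsdrop (n + k) X"
  by (cases X) (auto simp: add.commute add.left_commute)

lemma enat_le_slen_tsdrop:
  "enat n \<le> slen X \<Longrightarrow> enat k \<le> slen (tsdrop n X) \<longleftrightarrow> enat (n + k) \<le> slen X"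
  by (cases X) (simp_all add: le_diff_conv2 add.commute)

lemma sconc_Nil [simp]: "sconc [] X = X"
  by (cases X) auto

lemma slen_sconc: "slen (sconc zs X) = enat (length zs) + slen X"
  by (cases X) auto

lemma sconc_tstake_tsdrop: "enat n \<le> slen X \<Longrightarrow> sconc (tstake n X) (tsdrop n X) = X"
  by (cases X) (auto intro!: ext)

lemma tstake_sconc: "n \<le> length zs \<Longrightarrow> tstake n (sconc zs X) = take n zs"
  by (cases X) (auto intro!: nth_equalityI)

lemma tsdrop_sconc: "n \<le> length zs \<Longrightarrow> tsdrop n (sconc zs X) = sconc (drop n zs) X"
  by (cases X) (auto intro!: ext simp: less_diff_conv add.commute)

lemma sconc_drop_tstake:
  assumes "m \<le> n" "enat n \<le> slen X"
  shows "sconc (drop m (tstake n X)) (tsdrop n X) = tsdrop m X"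
proof -
  have "m \<le> length (tstake n X)" using assms by (simp add: length_tstake)
  then show ?thesis
    using tsdrop_sconc sconc_tstake_tsdrop[OF assms(2)] by metis
qed

lemma eq_sconc_iff:
  "X = sconc zs Y \<longleftrightarrow>
     enat (length zs) \<le> slen X \<and> zs = tstake (length zs) X \<and> Y = tsdrop (length zs) X"
proof
  assume "X = sconc zs Y"
  then show "enat (length zs) \<le> slen X \<and> zs = tstake (length zs) X \<and> Y = tsdrop (length zs) X"
    by (simp add: slen_sconc tstake_sconc tsdrop_sconc)
qed (metis sconc_tstake_tsdrop)

lemma tracesD:
  "X \<in> traces \<Longrightarrow> i \<le> j \<Longrightarrow> enat j < slen X \<Longrightarrow>
    0 \<le> snd (snth X i) \<and> snd (snth X i) \<le> snd (snth X j)"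
  by (simp add: traces_def is_ttrace_def)

lemma tsdrop_traces:
  assumes "X \<in> traces"
  shows "tsdrop n X \<in> traces"
  unfolding traces_def is_ttrace_def
proof (intro CollectI allI impI)
  fix i j assume ij: "i \<le> j \<and> enat j < slen (tsdrop n X)"
  then have j: "enat (j + n) < slen X" by (cases X) auto
  have "enat (i + n) \<le> enat (j + n)" using ij by simp
  from this j have i: "enat (i + n) < slen X" by (rule order.strict_trans1)
  show "0 \<le> snd (snth (tsdrop n X) i) \<and>
      snd (snth (tsdrop n X) i) \<le> snd (snth (tsdrop n X) j)"
    using tracesD[OF assms _ j, of "i + n"] ij i j by (simp add: snth_tsdrop)
qed

lemma time_Nil [simp]: "time [] = 0"
  by (simp add: time_def)

lemma time_append: "ys \<noteq> [] \<Longrightarrow> time (xs @ ys) = time ys"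
  by (simp add: time_def)

lemma time_tstake:
  "enat n \<le> slen X \<Longrightarrow> time (tstake n X) = (if n = 0 then 0 else snd (snth X (n - 1)))"
  by (cases n) (auto simp: time_def last_tstake dest: length_tstake)

lemma time_tstake_mono:
  assumes X: "X \<in> traces" and "m \<le> n" and n: "enat n \<le> slen X"
  shows "time (tstake m X) \<le> time (tstake n X)"
proof (cases "m = 0")
  case True
  have "0 \<le> snd (snth X (n - 1))" if "0 < n"
  proof -
    have "enat (n - 1) < slen X" using that n by (cases n) (simp_all add: Suc_ile_eq)
    then show ?thesis using tracesD[OF X order_refl] by blast
  qed
  with True n show ?thesis by (simp add: time_tstake)
next
  case False
  have "enat (n - 1) < slen X" using False assms(2) n by (cases n) (simp_all add: Suc_ile_eq)
  then have "snd (snth X (m - 1)) \<le> snd (snth X (n - 1))"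
    using tracesD[OF X diff_le_mono[OF assms(2)]] by blast
  with False assms(2) n enat_le_trans[OF assms(2) n] show ?thesis by (simp add: time_tstake)
qed

lemma all_splits_tstake_iff:
  assumes "enat k \<le> slen Y"
  shows "(\<forall>z2 z3. tstake k Y = z2 @ z3 \<and> z2 \<noteq> [] \<and> z3 \<noteq> [] \<longrightarrow> P z2 (sconc z3 (tsdrop k Y)))
     \<longleftrightarrow> (\<forall>m. 0 < m \<and> m < k \<longrightarrow> P (tstake m Y) (tsdrop m Y))"
proof
  assume splits: "\<forall>z2 z3. tstake k Y = z2 @ z3 \<and> z2 \<noteq> [] \<and> z3 \<noteq> [] \<longrightarrow>
    P z2 (sconc z3 (tsdrop k Y))"
  show "\<forall>m. 0 < m \<and> m < k \<longrightarrow> P (tstake m Y) (tsdrop m Y)"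
  proof (intro allI impI)
    fix m assume m: "0 < m \<and> m < k"
    have "length (tstake k Y) = k" using length_tstake[OF assms] .
    then have "P (take m (tstake k Y)) (sconc (drop m (tstake k Y)) (tsdrop k Y))"
      by (intro splits[rule_format]) (use m in auto)
    then show "P (tstake m Y) (tsdrop m Y)"
      using m assms by (simp add: take_tstake sconc_drop_tstake)
  qed
next
  assume indices: "\<forall>m. 0 < m \<and> m < k \<longrightarrow> P (tstake m Y) (tsdrop m Y)"
  show "\<forall>z2 z3. tstake k Y = z2 @ z3 \<and> z2 \<noteq> [] \<and> z3 \<noteq> [] \<longrightarrow>
    P z2 (sconc z3 (tsdrop k Y))"
  proof (intro allI impI)
    fix z2 z3 assume split: "tstake k Y = z2 @ z3 \<and> z2 \<noteq> [] \<and> z3 \<noteq> []"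
    define m where "m = length z2"
    have m: "0 < m" "m < k"
      using split length_tstake[OF assms] by (auto simp: m_def)
    have "z2 = tstake m Y"
      using split take_tstake[of m k Y] m by (simp add: m_def)
    moreover have "sconc z3 (tsdrop k Y) = tsdrop m Y"
      using split sconc_drop_tstake[of m k Y] m assms by (simp add: m_def)
    ultimately show "P z2 (sconc z3 (tsdrop k Y))" using indices m by simp
  qed
qed

lemma esg_sat_Until_iff:
  assumes "Y \<in> traces"
  shows "esg_sat w z Y (Until I \<phi> \<psi>) \<longleftrightarrow>
    (\<exists>k>0. enat k \<le> slen Y \<and> esg_sat w (z @ tstake k Y) (tsdrop k Y) \<psi> \<and>
       in_interval (time (z @ tstake k Y) - time z) I \<and>
       (\<forall>m. 0 < m \<and> m < k \<longrightarrow> esg_sat w (z @ tstake m Y) (tsdrop m Y) \<phi>))"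
    (is "_ \<longleftrightarrow> (\<exists>k>0. ?index k)")
proof
  assume "esg_sat w z Y (Until I \<phi> \<psi>)"
  then obtain z1 \<tau>' where z1: "z1 \<noteq> []" and Y: "Y = sconc z1 \<tau>'"
    and \<psi>: "esg_sat w (z @ z1) \<tau>' \<psi>" and I: "in_interval (time z1 - time z) I"
    and splits: "\<forall>z2 z3. z1 = z2 @ z3 \<and> z2 \<noteq> [] \<and> z3 \<noteq> [] \<longrightarrow>
      esg_sat w (z @ z2) (sconc z3 \<tau>') \<phi>"
    unfolding esg_sat.simps by blast
  from Y have k: "enat (length z1) \<le> slen Y"
    and z1_eq: "tstake (length z1) Y = z1" and \<tau>'_eq: "tsdrop (length z1) Y = \<tau>'"
    unfolding eq_sconc_iff by simp_all
  have "\<forall>m. 0 < m \<and> m < length z1 \<longrightarrow> esg_sat w (z @ tstake m Y) (tsdrop m Y) \<phi>"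
    using all_splits_tstake_iff[OF k, of "\<lambda>z2 \<tau>. esg_sat w (z @ z2) \<tau> \<phi>",
        unfolded z1_eq \<tau>'_eq] splits
    by blast
  with k \<psi> I z1_eq \<tau>'_eq time_append[OF z1, of z] have "?index (length z1)" by simp
  then show "\<exists>k>0. ?index k" using z1 by blast
next
  assume "\<exists>k>0. ?index k"
  then obtain k where "0 < k" and k: "enat k \<le> slen Y" and index: "?index k" by blast
  have nonempty: "tstake k Y \<noteq> []" using \<open>0 < k\<close> length_tstake[OF k] by auto
  show "esg_sat w z Y (Until I \<phi> \<psi>)"
    unfolding esg_sat.simps
  proof (intro exI conjI)
    show "tsdrop k Y \<in> traces" using tsdrop_traces[OF assms] .
    show "tstake k Y \<noteq> []" by (rule nonempty)
    show "Y = sconc (tstake k Y) (tsdrop k Y)" using sconc_tstake_tsdrop[OF k] by simp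
    show "esg_sat w (z @ tstake k Y) (tsdrop k Y) \<psi>" using index by blast
    show "in_interval (time (tstake k Y) - time z) I"
      using index time_append[OF nonempty, of z] by simp
    show "\<forall>z2 z3. tstake k Y = z2 @ z3 \<and> z2 \<noteq> [] \<and> z3 \<noteq> [] \<longrightarrow>
        esg_sat w (z @ z2) (sconc z3 (tsdrop k Y)) \<phi>"
      using all_splits_tstake_iff[OF k, of "\<lambda>z2 \<tau>. esg_sat w (z @ z2) \<tau> \<phi>"] index by simp
  qed
qed

lemma ex_greater_iff_ex_add: "(\<exists>j>i. P j) \<longleftrightarrow> (\<exists>k>0. P (i + k))" for i :: nat
proof
  assume "\<exists>j>i. P j"
  then obtain j where "i < j" "P j" by blast
  then show "\<exists>k>0. P (i + k)" by (intro exI[of _ "j - i"]) simp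
next
  assume "\<exists>k>0. P (i + k)"
  then obtain k where "0 < k" "P (i + k)" by blast
  then show "\<exists>j>i. P j" by (intro exI[of _ "i + k"]) simp
qed

lemma all_between_iff_all_add:
  "(\<forall>m. i < m \<and> m < i + k \<longrightarrow> P m) \<longleftrightarrow> (\<forall>m. 0 < m \<and> m < k \<longrightarrow> P (i + m))" for i :: nat
proof
  assume between: "\<forall>m. 0 < m \<and> m < k \<longrightarrow> P (i + m)"
  show "\<forall>m. i < m \<and> m < i + k \<longrightarrow> P m"
  proof (intro allI impI)
    fix m assume "i < m \<and> m < i + k"
    then have "0 < m - i \<and> m - i < k" by linarith
    with between have "P (i + (m - i))" by blast
    with \<open>i < m \<and> m < i + k\<close> show "P m" by simp
  qed
qed simp

lemma esg_sat_Until_tstake_iff: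
  assumes "T \<in> traces" "enat i \<le> slen T"
  shows "esg_sat w (tstake i T) (tsdrop i T) (Until I \<phi> \<psi>) \<longleftrightarrow>
    (\<exists>j>i. enat j \<le> slen T \<and> esg_sat w (tstake j T) (tsdrop j T) \<psi> \<and>
       in_interval (time (tstake j T) - time (tstake i T)) I \<and>
       (\<forall>m. i < m \<and> m < j \<longrightarrow> esg_sat w (tstake m T) (tsdrop m T) \<phi>))"
  unfolding ex_greater_iff_ex_add[of i] all_between_iff_all_add
  using esg_sat_Until_iff[OF tsdrop_traces[OF assms(1)], of w "tstake i T"]
    enat_le_slen_tsdrop[OF assms(2)]
  by (simp only: tstake_add[symmetric] tsdrop_add)

(* Position n of the word stands for the history consisting of the first n actions of T, so
   the word has one letter more than the trace. *)
definition word_trace_agree :: "'p timed_word \<Rightarrow> 'p world \<Rightarrow> ttrace \<Rightarrow> bool" where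
  "word_trace_agree \<rho> w T \<longleftrightarrow> slen \<rho> = eSuc (slen T) \<and>
     (\<forall>n. enat n \<le> slen T \<longrightarrow>
        snd (snth \<rho> n) = time (tstake n T) \<and> fst (snth \<rho> n) = {p. w p (tstake n T)})"

lemma mtl_sat_iff_esg_sat:
  assumes agree: "word_trace_agree \<rho> w T" and T: "T \<in> traces"
  shows "enat i \<le> slen T \<Longrightarrow> mtl_sat \<rho> i \<phi> \<longleftrightarrow> esg_sat w (tstake i T) (tsdrop i T) \<phi>"
proof (induction \<phi> arbitrary: i)
  case (Atom p)
  then show ?case using agree by (simp add: word_trace_agree_def)
next
  case (Until I \<phi> \<psi>)
  have "mtl_sat \<rho> i (Until I \<phi> \<psi>) \<longleftrightarrow>
    (\<exists>j>i. enat j \<le> slen T \<and> mtl_sat \<rho> j \<psi> \<and>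
       in_interval (time (tstake j T) - time (tstake i T)) I \<and>
       (\<forall>m. i < m \<and> m < j \<longrightarrow> mtl_sat \<rho> m \<phi>))"
    using agree Until.prems by (auto simp: word_trace_agree_def)
  also have "\<dots> \<longleftrightarrow> esg_sat w (tstake i T) (tsdrop i T) (Until I \<phi> \<psi>)"
    unfolding esg_sat_Until_tstake_iff[OF T Until.prems]
    using Until.IH by (meson enat_ord_simps(2) order_less_le_trans less_imp_le)
  finally show ?case .
qed simp_all

lemma mtl_sat_0_iff_esg_sat_Nil:
  "word_trace_agree \<rho> w T \<Longrightarrow> T \<in> traces \<Longrightarrow> mtl_sat \<rho> 0 \<phi> \<longleftrightarrow> esg_sat w [] T \<phi>"
  using mtl_sat_iff_esg_sat[of \<rho> w T 0 \<phi>] by (simp add: zero_enat_def[symmetric])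

definition word_of_trace :: "'p world \<Rightarrow> ttrace \<Rightarrow> 'p timed_word" where
  "word_of_trace w T =
    (let letter = (\<lambda>n. ({p. w p (tstake n T)}, time (tstake n T)))
     in case T of Fin xs \<Rightarrow> Fin (map letter [0..<Suc (length xs)]) | Inf f \<Rightarrow> Inf letter)"

lemma slen_word_of_trace: "slen (word_of_trace w T) = eSuc (slen T)"
  by (cases T) (simp_all add: word_of_trace_def eSuc_enat)

lemma snth_word_of_trace:
  "enat n \<le> slen T \<Longrightarrow> snth (word_of_trace w T) n = ({p. w p (tstake n T)}, time (tstake n T))"
  by (cases T) (simp_all add: word_of_trace_def nth_append del: upt_Suc)

lemma word_trace_agree_word_of_trace: "word_trace_agree (word_of_trace w T) w T"
  by (simp add: word_trace_agree_def slen_word_of_trace snth_word_of_trace)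

lemma timed_word_word_of_trace:
  assumes "T \<in> traces"
  shows "timed_word (word_of_trace w T)"
  unfolding timed_word_def slen_word_of_trace
proof (intro conjI allI impI)
  show "0 < eSuc (slen T)" by simp
  show "snd (snth (word_of_trace w T) 0) = 0"
    by (simp add: snth_word_of_trace zero_enat_def[symmetric])
next
  fix i j assume "i \<le> j \<and> enat j < eSuc (slen T)"
  then have ij: "i \<le> j" and j: "enat j \<le> slen T" by simp_all
  then show "snd (snth (word_of_trace w T) i) \<le> snd (snth (word_of_trace w T) j)"
    using time_tstake_mono[OF assms ij j] enat_le_trans[OF ij j] by (simp add: snth_word_of_trace)
qed

(* The action names are irrelevant: world_of_word only looks at the length of the history. *)
definition trace_of_word :: "'p timed_word \<Rightarrow> ttrace" where
  "trace_of_word \<rho> =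
    (case \<rho> of Fin xs \<Rightarrow> Fin (map (\<lambda>x. (0, snd x)) (tl xs))
             | Inf f \<Rightarrow> Inf (\<lambda>n. (0, snd (f (Suc n)))))"

definition world_of_word :: "'p timed_word \<Rightarrow> 'p world" where
  "world_of_word \<rho> p z \<longleftrightarrow> p \<in> fst (snth \<rho> (length z))"

lemma slen_trace_of_word: "0 < slen \<rho> \<Longrightarrow> slen \<rho> = eSuc (slen (trace_of_word \<rho>))"
  by (cases \<rho>) (auto simp: trace_of_word_def eSuc_enat zero_enat_def)

lemma snth_trace_of_word:
  "enat n < slen (trace_of_word \<rho>) \<Longrightarrow> snth (trace_of_word \<rho>) n = (0, snd (snth \<rho> (Suc n)))"
  by (cases \<rho>) (auto simp: trace_of_word_def nth_tl)

lemma enat_less_slen_trace_of_word: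
  "0 < slen \<rho> \<Longrightarrow> enat n < slen (trace_of_word \<rho>) \<longleftrightarrow> enat (Suc n) < slen \<rho>"
  by (simp add: slen_trace_of_word eSuc_enat[symmetric])

lemma timed_word_mono:
  "timed_word \<rho> \<Longrightarrow> i \<le> j \<Longrightarrow> enat j < slen \<rho> \<Longrightarrow> snd (snth \<rho> i) \<le> snd (snth \<rho> j)"
  by (simp add: timed_word_def)

lemma trace_of_word_traces:
  assumes \<rho>: "timed_word \<rho>"
  shows "trace_of_word \<rho> \<in> traces"
  unfolding traces_def is_ttrace_def
proof (intro CollectI allI impI)
  fix i j assume ij: "i \<le> j \<and> enat j < slen (trace_of_word \<rho>)"
  have pos: "0 < slen \<rho>" and start: "snd (snth \<rho> 0) = 0"
    using \<rho> by (simp_all add: timed_word_def)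
  have j: "enat (Suc j) < slen \<rho>" using ij enat_less_slen_trace_of_word[OF pos] by simp
  have "enat (Suc i) \<le> enat (Suc j)" using ij by simp
  from this j have i: "enat (Suc i) < slen \<rho>" by (rule order.strict_trans1)
  show "0 \<le> snd (snth (trace_of_word \<rho>) i) \<and>
      snd (snth (trace_of_word \<rho>) i) \<le> snd (snth (trace_of_word \<rho>) j)"
    using timed_word_mono[OF \<rho> _ i, of 0] timed_word_mono[OF \<rho> _ j, of "Suc i"] start ij i
      enat_less_slen_trace_of_word[OF pos]
    by (simp add: snth_trace_of_word)
qed

lemma word_trace_agree_trace_of_word:
  assumes \<rho>: "timed_word \<rho>"
  shows "word_trace_agree \<rho> (world_of_word \<rho>) (trace_of_word \<rho>)"
  unfolding word_trace_agree_def
proof (intro conjI allI impI)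
  have pos: "0 < slen \<rho>" and start: "snd (snth \<rho> 0) = 0"
    using \<rho> by (simp_all add: timed_word_def)
  show "slen \<rho> = eSuc (slen (trace_of_word \<rho>))" using pos by (rule slen_trace_of_word)
  fix n assume n: "enat n \<le> slen (trace_of_word \<rho>)"
  show "fst (snth \<rho> n) = {p. world_of_word \<rho> p (tstake n (trace_of_word \<rho>))}"
    using length_tstake[OF n] by (simp add: world_of_word_def)
  show "snd (snth \<rho> n) = time (tstake n (trace_of_word \<rho>))"
  proof (cases n)
    case 0
    then show ?thesis using start by simp
  next
    case (Suc m)
    then have "enat m < slen (trace_of_word \<rho>)" using n by (simp add: Suc_ile_eq)
    then show ?thesis using Suc n by (simp add: time_tstake snth_trace_of_word)
  qed
qed

theorem mainTheorem10:
  fixes \<phi> :: "'p form"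
  shows "mtl_valid \<phi> \<longleftrightarrow> esg_valid \<phi>"
proof
  assume "mtl_valid \<phi>"
  show "esg_valid \<phi>"
    unfolding esg_valid_def
  proof (intro allI impI)
    fix w :: "'p world" and T
    assume T: "T \<in> traces"
    with \<open>mtl_valid \<phi>\<close> have "mtl_sat (word_of_trace w T) 0 \<phi>"
      unfolding mtl_valid_def by (simp add: timed_word_word_of_trace)
    then show "esg_sat w [] T \<phi>"
      using mtl_sat_0_iff_esg_sat_Nil[OF word_trace_agree_word_of_trace T] by blast
  qed
next
  assume "esg_valid \<phi>"
  show "mtl_valid \<phi>"
    unfolding mtl_valid_def
  proof (intro allI impI)
    fix \<rho> :: "'p timed_word"
    assume \<rho>: "timed_word \<rho>"
    with \<open>esg_valid \<phi>\<close> have "esg_sat (world_of_word \<rho>) [] (trace_of_word \<rho>) \<phi>"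
      unfolding esg_valid_def by (simp add: trace_of_word_traces)
    then show "mtl_sat \<rho> 0 \<phi>"
      using mtl_sat_0_iff_esg_sat_Nil[OF word_trace_agree_trace_of_word trace_of_word_traces, OF \<rho> \<rho>]
      by blast
  qed
qed

end
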